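(* Let $B_1\subseteq B$, $R_1$ the subroot system with simple roots $B_1$, $R_1^+=R_1\cap R^+$, $\rho'=\frac12\sum_{\alpha\in R_1^+}\alpha$. Suppose $w\in W$ and $w(R_1)=R_1$. Then $\big(\rho',\sum_{\alpha\in Q(w)}\alpha\big)\ge 0$, with equality if and only if $w(B_1)=B_1$.
   Context: $R$ is a reduced crystallographic root system with $W$-invariant positive definite inner product $(\cdot,\cdot)$ on the real span of the roots, positive system $R^+$, simple roots $B$ and Weyl group $W$. For $B_1\subseteq B$, $R_1$ is the set of roots in the $\mathbb Z$-span of $B_1$. For $w\in W$, $Q(w)=\{\alpha\in R^+: w\alpha\in -R^+\}$ and $\ell(w)=|Q(w)|$. *)

theory Defs
  imports "HOL-Analysis.Analysis"
begin

definition refl_vec :: "'a::real_inner \<Rightarrow> 'a \<Rightarrow> 'a" where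
  "refl_vec a x = x - ((2 * (x \<bullet> a)) / (a \<bullet> a)) *\<^sub>R a"

definition root_system :: "'a::euclidean_space set \<Rightarrow> bool" where
  "root_system R \<longleftrightarrow> finite R \<and> 0 \<notin> R
     \<and> (\<forall>a\<in>R. \<forall>b\<in>R. refl_vec a b \<in> R)
     \<and> (\<forall>a\<in>R. \<forall>b\<in>R. (2 * (b \<bullet> a)) / (a \<bullet> a) \<in> \<int>)
     \<and> (\<forall>a\<in>R. \<forall>c::real. c *\<^sub>R a \<in> R \<longrightarrow> c = 1 \<or> c = -1)"

definition nonneg_int_comb :: "'a::real_vector set \<Rightarrow> 'a \<Rightarrow> bool" where
  "nonneg_int_comb B x \<longleftrightarrow>
     (\<exists>c. (\<forall>a\<in>B. c a \<in> \<int> \<and> c a \<ge> 0) \<and> x = (\<Sum>a\<in>B. c a *\<^sub>R a))"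

definition int_span :: "'a::real_vector set \<Rightarrow> 'a set" where
  "int_span B = {x. \<exists>c. (\<forall>a\<in>B. c a \<in> \<int>) \<and> x = (\<Sum>a\<in>B. c a *\<^sub>R a)}"

definition simple_roots :: "'a::euclidean_space set \<Rightarrow> 'a set \<Rightarrow> bool" where
  "simple_roots R B \<longleftrightarrow> B \<subseteq> R \<and> independent B
     \<and> (\<forall>b\<in>R. nonneg_int_comb B b \<or> nonneg_int_comb B (- b))"

definition pos_roots :: "'a::euclidean_space set \<Rightarrow> 'a set \<Rightarrow> 'a set" where
  "pos_roots R B = {b\<in>R. nonneg_int_comb B b}"

inductive_set weyl_group :: "'a::euclidean_space set \<Rightarrow> ('a \<Rightarrow> 'a) set" for R where
  weyl_id: "id \<in> weyl_group R"
| weyl_step: "w \<in> weyl_group R \<Longrightarrow> a \<in> R \<Longrightarrow> refl_vec a \<circ> w \<in> weyl_group R"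

text \<open>Subroot system R_1 with simple roots B_1: roots in the Z-span of B_1.\<close>
definition sub_roots :: "'a::euclidean_space set \<Rightarrow> 'a set \<Rightarrow> 'a set" where
  "sub_roots R B1 = R \<inter> int_span B1"

definition inv_set :: "'a::euclidean_space set \<Rightarrow> 'a set \<Rightarrow> ('a \<Rightarrow> 'a) \<Rightarrow> 'a set" where
  "inv_set R B w = {a \<in> pos_roots R B. - (w a) \<in> pos_roots R B}"

end

theory Submission
  imports Defs
begin

text \<open>
  Write \<open>S\<close> for the sum of the positive roots and \<open>S\<^sub>1 = 2\<rho>'\<close> for the sum of the positive
  roots of \<open>R\<^sub>1\<close>. If a linear map \<open>u\<close> permutes a finite set \<open>P \<union> -P\<close>, then
  \<open>a \<mapsto> \<plusminus>u a\<close> (with the sign putting it into \<open>P\<close>) permutes \<open>P\<close>, whence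
  \<open>u(\<Sigma>P) - \<Sigma>P = 2 u(\<Sigma> {a \<in> P. -u a \<in> P})\<close>. Applying this to \<open>w\<close> on \<open>R\<close> and on \<open>R\<^sub>1\<close> and using
  that \<open>w\<close> is orthogonal gives \<open>(S\<^sub>1, \<Sigma>Q(w)) = \<Sigma> (S, -w a)\<close>, summed over the positive roots
  \<open>a\<close> of \<open>R\<^sub>1\<close> with \<open>w a\<close> negative. Each term is positive because \<open>(S, b) = (b, b)\<close> for simple
  \<open>b\<close>, so the pairing is nonnegative and vanishes iff \<open>w\<close> maps \<open>R\<^sub>1\<^sup>+\<close> to itself. Comparing
  heights (coordinate sums in the base) shows that this happens iff \<open>w\<close> permutes \<open>B\<^sub>1\<close>.
\<close>

lemma orthogonal_transformation_refl_vec: "orthogonal_transformation (refl_vec a)"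
  unfolding orthogonal_transformation_def
proof
  show "linear (refl_vec a)"
    unfolding refl_vec_def
    by (intro linearI) (simp_all add: inner_add_left algebra_simps add_divide_distrib scaleR_add_left)
  show "\<forall>x y. refl_vec a x \<bullet> refl_vec a y = x \<bullet> y"
    by (cases "a = 0") (simp_all add: refl_vec_def inner_diff_left inner_diff_right inner_commute field_simps)
qed

lemma refl_vec_self: "a \<noteq> 0 \<Longrightarrow> refl_vec a a = - a"
  unfolding refl_vec_def by (simp add: algebra_simps scaleR_2)

lemma refl_vec_refl_vec: "refl_vec a (refl_vec a x) = x"
  by (cases "a = 0") (simp_all add: refl_vec_def inner_diff_left field_simps)

lemma weyl_group_orthogonal_transformation:
  "w \<in> weyl_group R \<Longrightarrow> orthogonal_transformation w"
proof (induction rule: weyl_group.induct)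
  case weyl_id
  then show ?case by (simp add: id_def)
next
  case (weyl_step w a)
  then show ?case
    by (metis orthogonal_transformation_compose orthogonal_transformation_refl_vec)
qed

lemma weyl_group_image_roots:
  assumes "root_system R" and "w \<in> weyl_group R"
  shows "w ` R = R"
proof -
  have "w ` R \<subseteq> R"
    using assms(2) by induction (use assms(1) in \<open>auto simp: root_system_def\<close>)
  moreover have "inj_on w R"
    using orthogonal_transformation_inj[OF weyl_group_orthogonal_transformation[OF assms(2)]]
    by (rule inj_on_subset) (rule subset_UNIV)
  ultimately show ?thesis
    using assms(1) endo_inj_surj unfolding root_system_def by blast
qed

lemma sum_sign_inversions:
  fixes u :: "'a::real_vector \<Rightarrow> 'a"
  assumes fin: "finite P" and disj: "P \<inter> uminus ` P = {}" and lin: "linear u"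
    and maps: "u ` (P \<union> uminus ` P) \<subseteq> P \<union> uminus ` P"
    and inj: "inj_on u (P \<union> uminus ` P)"
  shows "u (\<Sum>P) - \<Sum>P = 2 *\<^sub>R u (\<Sum>{a\<in>P. - u a \<in> P})"
proof -
  define Q where "Q = {a\<in>P. - u a \<in> P}"
  define \<phi> where "\<phi> a = (if a \<in> Q then - u a else u a)" for a
  have \<phi>_P: "\<phi> a \<in> P" if "a \<in> P" for a
    using maps that unfolding \<phi>_def Q_def by force
  have "inj_on \<phi> P"
  proof (rule inj_onI)
    fix a b assume ab: "a \<in> P" "b \<in> P" "\<phi> a = \<phi> b"
    have "u a = u b \<or> u a = u (- b) \<or> u (- a) = u b"
      using ab(3) linear_neg[OF lin] unfolding \<phi>_def by (auto split: if_splits)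
    then show "a = b"
      using ab(1,2) disj inj unfolding inj_on_def by blast
  qed
  then have "\<phi> ` P = P"
    using endo_inj_surj[OF fin] \<phi>_P by blast
  then have "\<Sum>P = (\<Sum>a\<in>P. \<phi> a)"
    using sum.reindex[OF \<open>inj_on \<phi> P\<close>, of id] by simp
  also have "\<dots> = (\<Sum>a\<in>P. u a) - 2 *\<^sub>R (\<Sum>a\<in>Q. u a)"
  proof -
    have "Q \<subseteq> P" unfolding Q_def by blast
    then show ?thesis
      using fin unfolding \<phi>_def
      by (simp add: sum.If_cases Int_absorb1 Diff_eq[symmetric] sum_diff finite_subset sum_negf scaleR_2)
  qed
  finally show ?thesis
    unfolding Q_def[symmetric] linear_sum[OF lin] by simp
qed

lemma sum_pos_eq_0_iff:
  fixes f :: "'a \<Rightarrow> 'b::ordered_comm_monoid_add"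
  assumes "finite A" and "\<And>a. a \<in> A \<Longrightarrow> 0 < f a"
  shows "sum f A = 0 \<longleftrightarrow> A = {}"
  using sum_pos[OF assms(1) _ assms(2)] by force

lemma uminus_int_span:
  assumes "x \<in> int_span A"
  shows "- x \<in> int_span A"
proof -
  obtain c where "\<forall>a\<in>A. c a \<in> \<int>" and "x = (\<Sum>a\<in>A. c a *\<^sub>R a)"
    using assms unfolding int_span_def by blast
  then show ?thesis
    unfolding int_span_def by (intro CollectI exI[of _ "\<lambda>a. - c a"]) (simp add: sum_negf)
qed

lemma sum_delta_scaleR:
  fixes A :: "'a::real_vector set"
  assumes "finite A" and "b \<in> A"
  shows "(\<Sum>a\<in>A. (if a = b then 1 else 0) *\<^sub>R a) = b"
proof -
  have "(\<Sum>a\<in>A. (if a = b then 1 else 0) *\<^sub>R a) = (\<Sum>a\<in>A. if a = b then a else 0)"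
    by (rule sum.cong) auto
  then show ?thesis
    using assms by (simp add: sum.delta)
qed

lemma int_span_superset:
  assumes "finite A"
  shows "A \<subseteq> int_span A"
  unfolding int_span_def
  using sum_delta_scaleR[OF assms, symmetric]
  by (auto intro!: exI[of _ "\<lambda>a. if a = _ then 1 else 0"])

locale based_root_system =
  fixes R B :: "'a::euclidean_space set"
  assumes root_system: "root_system R" and simple_roots: "simple_roots R B"
begin

abbreviation Rpos where "Rpos \<equiv> pos_roots R B"

lemma finite_roots: "finite R"
  and zero_notin_roots: "0 \<notin> R"
  and refl_vec_in_roots: "a \<in> R \<Longrightarrow> b \<in> R \<Longrightarrow> refl_vec a b \<in> R"
  and roots_reduced: "a \<in> R \<Longrightarrow> c *\<^sub>R a \<in> R \<Longrightarrow> c = 1 \<or> c = -1"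
  using root_system unfolding root_system_def by blast+

lemma simple_subset_roots: "B \<subseteq> R"
  and independent_simple: "independent B"
  and roots_sign_comb: "x \<in> R \<Longrightarrow> nonneg_int_comb B x \<or> nonneg_int_comb B (- x)"
  using simple_roots unfolding simple_roots_def by blast+

lemma finite_simple: "finite B"
  using independent_simple by (rule finiteI_independent)

lemma uminus_in_roots:
  assumes "a \<in> R"
  shows "- a \<in> R"
proof -
  have "a \<noteq> 0"
    using assms zero_notin_roots by blast
  then show ?thesis
    using refl_vec_in_roots[OF assms assms] by (simp add: refl_vec_self)
qed

text \<open>The coordinate functionals of the basis \<open>B\<close> of \<open>span B\<close>, extended linearly
  (arbitrarily) to the whole space.\<close>

definition coord :: "'a \<Rightarrow> 'a \<Rightarrow> real" where
  "coord b = (SOME f. linear f \<and> (\<forall>g\<in>B. f g = (if g = b then 1 else 0)))"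

lemma linear_coord: "linear (coord b)"
  and coord_simple: "g \<in> B \<Longrightarrow> coord b g = (if g = b then 1 else 0)"
proof -
  have "\<exists>f. linear f \<and> (\<forall>g\<in>B. f g = (if g = b then (1::real) else 0))"
    by (rule linear_independent_extend[OF independent_simple])
  then have "linear (coord b) \<and> (\<forall>g\<in>B. coord b g = (if g = b then 1 else 0))"
    unfolding coord_def by (rule someI_ex)
  then show "linear (coord b)" "g \<in> B \<Longrightarrow> coord b g = (if g = b then 1 else 0)"
    by blast+
qed

lemma coord_sum:
  assumes "A \<subseteq> B"
  shows "coord b (\<Sum>a\<in>A. c a *\<^sub>R a) = (if b \<in> A then c b else 0)"
proof -
  have "coord b (\<Sum>a\<in>A. c a *\<^sub>R a) = (\<Sum>a\<in>A. if a = b then c a else 0)"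
    using assms coord_simple
    by (auto simp: linear_sum[OF linear_coord] linear_scale[OF linear_coord] intro!: sum.cong)
  then show ?thesis
    using finite_subset[OF assms finite_simple] by (simp add: sum.delta)
qed

lemma pos_roots_subset_roots: "Rpos \<subseteq> R"
  unfolding pos_roots_def by blast

lemma finite_pos_roots: "finite Rpos"
  using finite_subset[OF pos_roots_subset_roots finite_roots] .

lemma
  assumes "x \<in> Rpos"
  shows coord_pos_root_Ints: "b \<in> B \<Longrightarrow> coord b x \<in> \<int>"
    and coord_pos_root_nonneg: "b \<in> B \<Longrightarrow> 0 \<le> coord b x"
    and pos_root_eq_sum_coord: "x = (\<Sum>b\<in>B. coord b x *\<^sub>R b)"
proof -
  obtain c where c: "\<forall>a\<in>B. c a \<in> \<int> \<and> 0 \<le> c a" and x: "x = (\<Sum>a\<in>B. c a *\<^sub>R a)"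
    using assms unfolding pos_roots_def nonneg_int_comb_def by blast
  have coord_x: "coord b x = c b" if "b \<in> B" for b
    using coord_sum[of B b c] that unfolding x by simp
  show "b \<in> B \<Longrightarrow> coord b x \<in> \<int>" "b \<in> B \<Longrightarrow> 0 \<le> coord b x"
    using c coord_x by simp_all
  have "(\<Sum>b\<in>B. coord b x *\<^sub>R b) = (\<Sum>b\<in>B. c b *\<^sub>R b)"
    by (rule sum.cong) (simp_all add: coord_x)
  then show "x = (\<Sum>b\<in>B. coord b x *\<^sub>R b)"
    using x by simp
qed

lemma uminus_pos_root_notin:
  assumes x: "x \<in> Rpos"
  shows "- x \<notin> Rpos"
proof
  assume "- x \<in> Rpos"
  then have "coord b x = 0" if "b \<in> B" for b
    using coord_pos_root_nonneg[OF x that] coord_pos_root_nonneg[of "- x" b] that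
    by (simp add: linear_neg[OF linear_coord])
  then have "x = 0"
    using pos_root_eq_sum_coord[OF x] by simp
  then show False
    using x pos_roots_subset_roots zero_notin_roots by blast
qed

lemma roots_pos_or_neg:
  assumes "x \<in> R"
  shows "x \<in> Rpos \<or> - x \<in> Rpos"
  using roots_sign_comb[OF assms] assms uminus_in_roots unfolding pos_roots_def by blast

lemma simple_subset_pos_roots: "B \<subseteq> Rpos"
  unfolding pos_roots_def nonneg_int_comb_def
  using simple_subset_roots sum_delta_scaleR[OF finite_simple, symmetric]
  by (auto intro!: exI[of _ "\<lambda>a. if a = _ then 1 else 0"])

lemma pos_root_coord_ge_1:
  assumes x: "x \<in> Rpos"
  obtains b where "b \<in> B" and "1 \<le> coord b x"
proof -
  have "\<exists>b\<in>B. coord b x \<noteq> 0"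
  proof (rule ccontr)
    assume "\<not> ?thesis"
    then have "x = 0"
      using pos_root_eq_sum_coord[OF x] by simp
    then show False
      using x pos_roots_subset_roots zero_notin_roots by blast
  qed
  then obtain b where b: "b \<in> B" and "coord b x \<noteq> 0" by blast
  then have "1 \<le> coord b x"
    using Ints_nonzero_abs_ge1[OF coord_pos_root_Ints[OF x b]] coord_pos_root_nonneg[OF x b] by simp
  then show thesis
    using b that by blast
qed

lemma pos_root_eq_simple:
  assumes b: "b \<in> B" and x: "x \<in> Rpos" and "\<forall>g\<in>B - {b}. coord g x = 0"
  shows "x = b"
proof -
  have "x = (\<Sum>g\<in>B. coord g x *\<^sub>R g)"
    by (rule pos_root_eq_sum_coord[OF x])
  also have "\<dots> = coord b x *\<^sub>R b + (\<Sum>g\<in>B - {b}. coord g x *\<^sub>R g)"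
    by (rule sum.remove[OF finite_simple b])
  also have "(\<Sum>g\<in>B - {b}. coord g x *\<^sub>R g) = 0"
    using assms(3) by simp
  finally have "x = coord b x *\<^sub>R b"
    by (simp only: add_0_right)
  then have "coord b x = 1 \<or> coord b x = -1"
    using x b pos_roots_subset_roots simple_subset_roots roots_reduced by (metis subsetD)
  then show ?thesis
    using \<open>x = coord b x *\<^sub>R b\<close> coord_pos_root_nonneg[OF x b] by auto
qed

lemma refl_vec_simple_pos_root:
  assumes b: "b \<in> B" and x: "x \<in> Rpos" and "x \<noteq> b"
  shows "refl_vec b x \<in> Rpos"
proof -
  obtain g where g: "g \<in> B" "g \<noteq> b" and "coord g x \<noteq> 0"
    using pos_root_eq_simple[OF b x] \<open>x \<noteq> b\<close> by blast
  then have pos: "0 < coord g x"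
    using coord_pos_root_nonneg[OF x g(1)] by simp
  have "coord g (refl_vec b x) = coord g x"
    unfolding refl_vec_def using g coord_simple[OF b, of g]
    by (simp add: linear_diff[OF linear_coord] linear_scale[OF linear_coord])
  moreover have "refl_vec b x \<in> R"
    using b x simple_subset_roots pos_roots_subset_roots refl_vec_in_roots by blast
  ultimately show ?thesis
    using roots_pos_or_neg pos coord_pos_root_nonneg[OF _ g(1), of "- refl_vec b x"]
    by (force simp: linear_neg[OF linear_coord])
qed

lemma refl_vec_simple_permutes:
  assumes b: "b \<in> B"
  shows "bij_betw (refl_vec b) (Rpos - {b}) (Rpos - {b})"
proof -
  have b0: "b \<noteq> 0"
    using b simple_subset_roots zero_notin_roots by blast
  have "refl_vec b x \<noteq> b" if "x \<in> Rpos" for x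
  proof
    assume "refl_vec b x = b"
    then have "x = refl_vec b b"
      by (metis refl_vec_refl_vec)
    then have "- b \<in> Rpos"
      using that refl_vec_self[OF b0] by simp
    then show False
      using b simple_subset_pos_roots uminus_pos_root_notin by blast
  qed
  then have "refl_vec b ` (Rpos - {b}) \<subseteq> Rpos - {b}"
    using refl_vec_simple_pos_root[OF b] by (intro image_subsetI) simp
  moreover have inj: "inj_on (refl_vec b) (Rpos - {b})"
    by (rule inj_on_inverseI[of _ "refl_vec b"]) (rule refl_vec_refl_vec)
  ultimately have "refl_vec b ` (Rpos - {b}) = Rpos - {b}"
    by (rule endo_inj_surj[OF finite_Diff[OF finite_pos_roots]])
  then show ?thesis
    using inj unfolding bij_betw_def by blast
qed

lemma inner_sum_pos_roots_simple:
  assumes b: "b \<in> B"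
  shows "(\<Sum>Rpos) \<bullet> b = b \<bullet> b"
proof -
  have b0: "b \<noteq> 0"
    using b simple_subset_roots zero_notin_roots by blast
  have bpos: "b \<in> Rpos"
    using b simple_subset_pos_roots by blast
  have perm: "(\<Sum>x\<in>Rpos - {b}. refl_vec b x) = \<Sum>(Rpos - {b})"
    by (rule sum.reindex_bij_betw[OF refl_vec_simple_permutes[OF b]])
  have "refl_vec b (\<Sum>Rpos) = (\<Sum>x\<in>Rpos. refl_vec b x)"
    by (simp add: linear_sum[OF orthogonal_transformation_linear[OF orthogonal_transformation_refl_vec]])
  also have "\<dots> = refl_vec b b + (\<Sum>x\<in>Rpos - {b}. refl_vec b x)"
    by (rule sum.remove[OF finite_pos_roots bpos])
  also have "\<dots> = - b + \<Sum>(Rpos - {b})"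
    using perm refl_vec_self[OF b0] by simp
  also have "\<Sum>(Rpos - {b}) = \<Sum>Rpos - b"
    using finite_pos_roots bpos by (simp add: sum_diff1)
  finally have "refl_vec b (\<Sum>Rpos) = \<Sum>Rpos - 2 *\<^sub>R b"
    by (simp add: scaleR_2)
  then have "(2 * ((\<Sum>Rpos) \<bullet> b) / (b \<bullet> b)) *\<^sub>R b = 2 *\<^sub>R b"
    unfolding refl_vec_def by simp
  then show ?thesis
    using b0 by (simp add: field_simps)
qed

lemma inner_sum_pos_roots_pos:
  assumes x: "x \<in> Rpos"
  shows "0 < (\<Sum>Rpos) \<bullet> x"
proof -
  obtain b where b: "b \<in> B" "1 \<le> coord b x"
    using pos_root_coord_ge_1[OF x] .
  have "(\<Sum>Rpos) \<bullet> x = (\<Sum>Rpos) \<bullet> (\<Sum>g\<in>B. coord g x *\<^sub>R g)"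
    using pos_root_eq_sum_coord[OF x] by (rule arg_cong)
  also have "\<dots> = (\<Sum>g\<in>B. coord g x * (g \<bullet> g))"
    by (simp add: inner_sum_right inner_sum_pos_roots_simple)
  also have "\<dots> > 0"
  proof (rule sum_pos2[OF finite_simple b(1)])
    have "b \<noteq> 0"
      using b(1) simple_subset_roots zero_notin_roots by blast
    then show "0 < coord b x * (b \<bullet> b)"
      using b(2) by simp
    show "0 \<le> coord g x * (g \<bullet> g)" if "g \<in> B" for g
      using coord_pos_root_nonneg[OF x that] by simp
  qed
  finally show ?thesis .
qed

definition height :: "'a \<Rightarrow> real" where
  "height x = (\<Sum>b\<in>B. coord b x)"

lemma linear_height: "linear height"
  unfolding height_def by (intro linear_compose_sum) (auto simp: linear_coord finite_simple)

lemma height_simple: "b \<in> B \<Longrightarrow> height b = 1"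
  unfolding height_def using finite_simple by (simp add: coord_simple sum.delta)

lemma height_pos_root_ge_1:
  assumes x: "x \<in> Rpos"
  shows "1 \<le> height x"
proof -
  obtain b where b: "b \<in> B" "1 \<le> coord b x"
    using pos_root_coord_ge_1[OF x] .
  have "coord b x \<le> height x"
    unfolding height_def using b(1) finite_simple coord_pos_root_nonneg[OF x]
    by (intro member_le_sum) auto
  then show ?thesis
    using b(2) by simp
qed

lemma height_pos_root_eq_1_imp_simple:
  assumes x: "x \<in> Rpos" and "height x = 1"
  shows "x \<in> B"
proof -
  obtain b where b: "b \<in> B" "1 \<le> coord b x"
    using pos_root_coord_ge_1[OF x] .
  have nonneg: "0 \<le> coord g x" if "g \<in> B - {b}" for g
    using coord_pos_root_nonneg[OF x] that by blast
  have "height x = coord b x + (\<Sum>g\<in>B - {b}. coord g x)"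
    unfolding height_def by (rule sum.remove[OF finite_simple b(1)])
  moreover have "0 \<le> (\<Sum>g\<in>B - {b}. coord g x)"
    using nonneg by (rule sum_nonneg)
  ultimately have "(\<Sum>g\<in>B - {b}. coord g x) = 0"
    using assms(2) b(2) by linarith
  then have "\<forall>g\<in>B - {b}. coord g x = 0"
    by (simp only: sum_nonneg_eq_0_iff[OF finite_Diff[OF finite_simple] nonneg])
  then have "x = b"
    by (rule pos_root_eq_simple[OF b(1) x])
  then show ?thesis
    using b(1) by simp
qed

lemma coord_int_span:
  assumes "A \<subseteq> B" and "x \<in> int_span A" and "g \<notin> A"
  shows "coord g x = 0"
  using assms coord_sum[OF assms(1)] unfolding int_span_def by auto

lemma simple_root_in_int_span:
  assumes "A \<subseteq> B" and "g \<in> B" and "g \<in> int_span A"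
  shows "g \<in> A"
proof (rule ccontr)
  assume "g \<notin> A"
  then have "coord g g = 0"
    by (rule coord_int_span[OF assms(1,3)])
  then show False
    using coord_simple[OF assms(2), of g] by simp
qed

lemma pos_root_int_span_eq_sum_coord:
  assumes A: "A \<subseteq> B" and x: "x \<in> Rpos" "x \<in> int_span A"
  shows "x = (\<Sum>a\<in>A. coord a x *\<^sub>R a)"
proof -
  have "x = (\<Sum>a\<in>B. coord a x *\<^sub>R a)"
    by (rule pos_root_eq_sum_coord[OF x(1)])
  also have "\<dots> = (\<Sum>a\<in>A. coord a x *\<^sub>R a)"
    using coord_int_span[OF A x(2)] A finite_simple by (intro sum.mono_neutral_right) auto
  finally show ?thesis .
qed

lemma height_int_span:
  assumes "A \<subseteq> B" and "x \<in> int_span A"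
  shows "height x = (\<Sum>a\<in>A. coord a x)"
  unfolding height_def
  using coord_int_span[OF assms] assms(1) finite_simple by (intro sum.mono_neutral_right) auto

lemma height_le_height_image:
  assumes v: "linear v" and A: "A \<subseteq> B" and "v ` A \<subseteq> Rpos"
    and x: "x \<in> Rpos" "x \<in> int_span A"
  shows "height x \<le> height (v x)"
proof -
  have "height x = (\<Sum>a\<in>A. coord a x)"
    by (rule height_int_span[OF A x(2)])
  also have "\<dots> \<le> (\<Sum>a\<in>A. coord a x * height (v a))"
  proof (rule sum_mono)
    fix a assume "a \<in> A"
    then have "0 \<le> coord a x" and "1 \<le> height (v a)"
      using A assms(3) coord_pos_root_nonneg[OF x(1)] height_pos_root_ge_1 by auto
    then show "coord a x \<le> coord a x * height (v a)"
      by (metis mult_left_mono mult.right_neutral)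
  qed
  also have "\<dots> = height (v (\<Sum>a\<in>A. coord a x *\<^sub>R a))"
    by (simp add: linear_sum[OF v] linear_scale[OF v] linear_sum[OF linear_height] linear_scale[OF linear_height])
  also have "\<dots> = height (v x)"
    by (simp only: pos_root_int_span_eq_sum_coord[OF A x, symmetric])
  finally show ?thesis .
qed

lemma pos_roots_Un_uminus:
  assumes "R1 \<subseteq> R" and "uminus ` R1 \<subseteq> R1"
  shows "pos_roots R1 B \<union> uminus ` pos_roots R1 B = R1"
  using assms roots_pos_or_neg unfolding pos_roots_def by (fastforce simp: image_iff)

lemma pos_roots_Int_uminus:
  assumes "R1 \<subseteq> R"
  shows "pos_roots R1 B \<inter> uminus ` pos_roots R1 B = {}"
  using assms uminus_pos_root_notin unfolding pos_roots_def by fastforce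

lemma inv_set_sum:
  assumes "R1 \<subseteq> R" and "uminus ` R1 \<subseteq> R1"
    and w: "orthogonal_transformation w" and "w ` R1 = R1"
  shows "w (\<Sum>(pos_roots R1 B)) - \<Sum>(pos_roots R1 B) = 2 *\<^sub>R w (\<Sum>(inv_set R1 B w))"
proof -
  have fin: "finite (pos_roots R1 B)"
    using assms(1) unfolding pos_roots_def by (auto intro: finite_subset[OF _ finite_roots])
  have R1_eq: "pos_roots R1 B \<union> uminus ` pos_roots R1 B = R1"
    by (rule pos_roots_Un_uminus[OF assms(1,2)])
  have "w (\<Sum>(pos_roots R1 B)) - \<Sum>(pos_roots R1 B)
          = 2 *\<^sub>R w (\<Sum>{a \<in> pos_roots R1 B. - w a \<in> pos_roots R1 B})"
  proof (rule sum_sign_inversions[OF fin pos_roots_Int_uminus[OF assms(1)]])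
    show "linear w"
      using w by (rule orthogonal_transformation_linear)
    show "w ` (pos_roots R1 B \<union> uminus ` pos_roots R1 B) \<subseteq> pos_roots R1 B \<union> uminus ` pos_roots R1 B"
      unfolding R1_eq using assms(4) by (rule equalityD1)
    show "inj_on w (pos_roots R1 B \<union> uminus ` pos_roots R1 B)"
      using orthogonal_transformation_inj[OF w] by (rule inj_on_subset) (rule subset_UNIV)
  qed
  then show ?thesis
    unfolding inv_set_def .
qed

lemma inner_sum_pos_roots_inv_set:
  assumes R1: "R1 \<subseteq> R" "uminus ` R1 \<subseteq> R1"
    and w: "orthogonal_transformation w" "w ` R = R" "w ` R1 = R1"
  shows "(\<Sum>(pos_roots R1 B)) \<bullet> (\<Sum>(inv_set R B w))
           = (\<Sum>a\<in>inv_set R1 B w. (\<Sum>Rpos) \<bullet> - w a)"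
proof -
  define S where "S = \<Sum>Rpos"
  define S1 where "S1 = \<Sum>(pos_roots R1 B)"
  have inner_w: "w x \<bullet> w y = x \<bullet> y" for x y
    using w(1) unfolding orthogonal_transformation_def by blast
  have "uminus ` R \<subseteq> R"
    using uminus_in_roots by blast
  then have hR: "w S - S = 2 *\<^sub>R w (\<Sum>(inv_set R B w))"
    unfolding S_def by (rule inv_set_sum[OF order_refl _ w(1,2)])
  have hR1: "w S1 - S1 = 2 *\<^sub>R w (\<Sum>(inv_set R1 B w))"
    unfolding S1_def by (rule inv_set_sum[OF R1 w(1,3)])
  have "2 * (S1 \<bullet> \<Sum>(inv_set R B w)) = w S1 \<bullet> (2 *\<^sub>R w (\<Sum>(inv_set R B w)))"
    by (simp add: inner_w)
  also have "\<dots> = w S1 \<bullet> w S - w S1 \<bullet> S"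
    by (simp only: hR[symmetric] inner_diff_right)
  also have "\<dots> = - ((w S1 - S1) \<bullet> S)"
    by (simp add: inner_w inner_diff_left)
  also have "\<dots> = 2 * (S \<bullet> - w (\<Sum>(inv_set R1 B w)))"
    by (simp add: hR1 inner_commute)
  finally have "S1 \<bullet> \<Sum>(inv_set R B w) = S \<bullet> - w (\<Sum>(inv_set R1 B w))"
    by simp
  then show ?thesis
    unfolding S_def S1_def
    by (simp add: linear_sum[OF orthogonal_transformation_linear[OF w(1)]] inner_sum_right sum_negf)
qed

lemma uminus_sub_roots: "uminus ` sub_roots R B1 \<subseteq> sub_roots R B1"
  unfolding sub_roots_def using uminus_in_roots uminus_int_span by blast

lemma pos_roots_sub_roots_iff:
  "x \<in> pos_roots (sub_roots R B1) B \<longleftrightarrow> x \<in> Rpos \<and> x \<in> int_span B1"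
  unfolding pos_roots_def sub_roots_def by blast

lemma simple_subset_pos_roots_sub_roots:
  assumes "B1 \<subseteq> B"
  shows "B1 \<subseteq> pos_roots (sub_roots R B1) B"
proof
  fix b assume "b \<in> B1"
  then have "b \<in> Rpos" and "b \<in> int_span B1"
    using assms simple_subset_pos_roots int_span_superset[OF finite_subset[OF assms finite_simple]]
    by blast+
  then show "b \<in> pos_roots (sub_roots R B1) B"
    unfolding pos_roots_sub_roots_iff by blast
qed

lemma inv_set_sub_roots_empty_if_simple_permuted:
  assumes B1: "B1 \<subseteq> B" and "linear w" and "w ` B1 = B1"
  shows "inv_set (sub_roots R B1) B w = {}"
proof (rule ccontr)
  assume "inv_set (sub_roots R B1) B w \<noteq> {}"
  then obtain a where a: "a \<in> Rpos" "a \<in> int_span B1" and na: "- w a \<in> Rpos"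
    unfolding inv_set_def pos_roots_sub_roots_iff by blast
  have "1 \<le> height a"
    using height_pos_root_ge_1[OF a(1)] .
  also have "\<dots> \<le> height (w a)"
    using height_le_height_image[OF assms(2) B1 _ a] assms(3) B1 simple_subset_pos_roots by auto
  finally have "1 \<le> height (w a)" .
  moreover have "1 \<le> height (- w a)"
    using height_pos_root_ge_1[OF na] .
  ultimately show False
    by (simp add: linear_neg[OF linear_height])
qed

lemma pos_roots_sub_roots_permuted:
  assumes w: "inj w" "w ` sub_roots R B1 = sub_roots R B1"
    and "inv_set (sub_roots R B1) B w = {}"
  shows "w ` pos_roots (sub_roots R B1) B = pos_roots (sub_roots R B1) B"
proof -
  let ?P1 = "pos_roots (sub_roots R B1) B"
  have "w a \<in> ?P1" if a: "a \<in> ?P1" for a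
  proof -
    have "w a \<in> sub_roots R B1"
      using a w(2) unfolding pos_roots_def by blast
    then have "w a \<in> ?P1 \<or> - w a \<in> ?P1"
      using roots_pos_or_neg uminus_sub_roots unfolding pos_roots_def sub_roots_def by blast
    then show ?thesis
      using assms(3) a unfolding inv_set_def by blast
  qed
  moreover have "finite ?P1"
    using finite_pos_roots by (rule finite_subset[rotated]) (auto simp: pos_roots_sub_roots_iff)
  ultimately show ?thesis
    using endo_inj_surj inj_on_subset[OF w(1) subset_UNIV] by blast
qed

lemma simple_image_if_pos_roots_sub_roots_permuted:
  assumes B1: "B1 \<subseteq> B" and w: "orthogonal_transformation w"
    and wP1: "w ` pos_roots (sub_roots R B1) B = pos_roots (sub_roots R B1) B"
    and b: "b \<in> B1"
  shows "w b \<in> B1"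
proof -
  let ?P1 = "pos_roots (sub_roots R B1) B"
  have inj: "inj w"
    using w by (rule orthogonal_transformation_inj)
  have B1_P1: "B1 \<subseteq> ?P1"
    using simple_subset_pos_roots_sub_roots[OF B1] .
  have inv_B1: "inv w ` B1 \<subseteq> Rpos"
  proof
    fix y assume "y \<in> inv w ` B1"
    then obtain g where g: "g \<in> B1" and y: "y = inv w g"
      by blast
    then have "g \<in> w ` ?P1"
      using B1_P1 wP1 by blast
    then obtain p where "p \<in> ?P1" and "g = w p"
      by blast
    then show "y \<in> Rpos"
      using y inj by (simp add: inv_f_f pos_roots_sub_roots_iff)
  qed
  have "w b \<in> ?P1"
    using b B1_P1 wP1 by blast
  then have wb: "w b \<in> Rpos" "w b \<in> int_span B1"
    unfolding pos_roots_sub_roots_iff by blast+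
  have "height (w b) \<le> height (inv w (w b))"
    using orthogonal_transformation_linear[OF orthogonal_transformation_inv[OF w]]
    by (rule height_le_height_image[OF _ B1 inv_B1 wb])
  also have "\<dots> = 1"
    using b B1 inj by (simp add: inv_f_f height_simple subsetD)
  finally have "height (w b) = 1"
    using height_pos_root_ge_1[OF wb(1)] by simp
  then have "w b \<in> B"
    by (rule height_pos_root_eq_1_imp_simple[OF wb(1)])
  then show ?thesis
    by (rule simple_root_in_int_span[OF B1 _ wb(2)])
qed

lemma simple_permuted_if_inv_set_sub_roots_empty:
  assumes B1: "B1 \<subseteq> B" and w: "orthogonal_transformation w"
    and "w ` sub_roots R B1 = sub_roots R B1" and "inv_set (sub_roots R B1) B w = {}"
  shows "w ` B1 = B1"
proof -
  have inj: "inj w"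
    using w by (rule orthogonal_transformation_inj)
  have "w ` B1 \<subseteq> B1"
    using simple_image_if_pos_roots_sub_roots_permuted[OF B1 w
        pos_roots_sub_roots_permuted[OF inj assms(3,4)]]
    by blast
  then show "w ` B1 = B1"
    using endo_inj_surj[OF finite_subset[OF B1 finite_simple]] inj_on_subset[OF inj subset_UNIV]
    by blast
qed

lemma inv_set_sub_roots_empty_iff:
  assumes "B1 \<subseteq> B" and "orthogonal_transformation w"
    and "w ` sub_roots R B1 = sub_roots R B1"
  shows "inv_set (sub_roots R B1) B w = {} \<longleftrightarrow> w ` B1 = B1"
  using inv_set_sub_roots_empty_if_simple_permuted[OF assms(1) orthogonal_transformation_linear[OF assms(2)]]
    simple_permuted_if_inv_set_sub_roots_empty[OF assms]
  by blast

end

theorem mainTheorem3: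
  fixes R B B1 :: "'a::euclidean_space set" and w :: "'a \<Rightarrow> 'a"
  assumes "root_system R"
    and "simple_roots R B"
    and "B1 \<subseteq> B"
    and "w \<in> weyl_group R"
    and "w ` sub_roots R B1 = sub_roots R B1"
  defines "\<rho> \<equiv> (1/2) *\<^sub>R (\<Sum>a\<in>sub_roots R B1 \<inter> pos_roots R B. a)"
  shows "\<rho> \<bullet> (\<Sum>a\<in>inv_set R B w. a) \<ge> 0
     \<and> (\<rho> \<bullet> (\<Sum>a\<in>inv_set R B w. a) = 0 \<longleftrightarrow> w ` B1 = B1)"
proof -
  interpret based_root_system R B
    using assms(1,2) by unfold_locales
  define R1 where "R1 = sub_roots R B1"
  define T where "T = (\<Sum>a\<in>inv_set R1 B w. (\<Sum>(pos_roots R B)) \<bullet> - w a)"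
  have w: "orthogonal_transformation w"
    using assms(4) by (rule weyl_group_orthogonal_transformation)
  have R1: "R1 \<subseteq> R" "uminus ` R1 \<subseteq> R1"
    unfolding R1_def using uminus_sub_roots by (auto simp: sub_roots_def)
  have "\<rho> = (1/2) *\<^sub>R \<Sum>(pos_roots R1 B)"
    unfolding \<rho>_def R1_def pos_roots_def sub_roots_def by (simp add: Int_def conj_commute)
  then have inner_eq: "\<rho> \<bullet> (\<Sum>a\<in>inv_set R B w. a) = T / 2"
    using inner_sum_pos_roots_inv_set[OF R1 w weyl_group_image_roots[OF assms(1,4)]] assms(5)
    unfolding T_def R1_def by simp
  have pos: "0 < (\<Sum>(pos_roots R B)) \<bullet> - w a" if "a \<in> inv_set R1 B w" for a
    using that R1(1) inner_sum_pos_roots_pos unfolding inv_set_def pos_roots_def by blast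
  have "finite (inv_set R1 B w)"
    using R1(1) by (intro finite_subset[OF _ finite_roots]) (auto simp: inv_set_def pos_roots_def)
  then have "T = 0 \<longleftrightarrow> inv_set R1 B w = {}"
    unfolding T_def using pos by (rule sum_pos_eq_0_iff)
  also have "\<dots> \<longleftrightarrow> w ` B1 = B1"
    unfolding R1_def by (rule inv_set_sub_roots_empty_iff[OF assms(3) w assms(5)])
  finally have "T = 0 \<longleftrightarrow> w ` B1 = B1" .
  moreover have "0 \<le> T"
    unfolding T_def using pos by (simp add: less_imp_le sum_nonneg)
  ultimately show ?thesis
    unfolding inner_eq by simp
qed

end
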